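(* If a solution $(x_1(t),x_2(t),x_3(t))$ of the Ricci flow system $\frac{dx_i}{dt}=-2r_ix_i$ satisfies $x_2(0)>x_1(0)>x_3(0)>0$, then $x_2(t)>x_1(t)>x_3(t)$ for all $t$ in its interval of existence. The same holds for the volume-normalized Ricci flow.
   Context: Here $d\in\{2,4,8\}$. For positive reals $x_1,x_2,x_3$ and $\{i,j,k\}=\{1,2,3\}$, define $$r_i=\frac{d x_i^2-d x_j^2-d x_k^2+(10d-8)x_jx_k}{2x_1x_2x_3}.$$ The Ricci flow of the $G$-invariant metrics $\sum_i x_i\langle\cdot,\cdot\rangle_0|_{V_i}$ on the flag manifolds $G/K$ is the ODE system $\frac{dx_i}{dt}=-2r_ix_i$. *)

theory Defs
  imports "HOL-Analysis.Analysis"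
begin

definition ric :: "real \<Rightarrow> real \<Rightarrow> real \<Rightarrow> real \<Rightarrow> real" where
  "ric d xi xj xk = (d * xi^2 - d * xj^2 - d * xk^2 + (10*d - 8) * xj * xk) / (2 * xi * xj * xk)"

definition r1 :: "real \<Rightarrow> real \<Rightarrow> real \<Rightarrow> real \<Rightarrow> real" where
  "r1 d x1 x2 x3 = ric d x1 x2 x3"
definition r2 :: "real \<Rightarrow> real \<Rightarrow> real \<Rightarrow> real \<Rightarrow> real" where
  "r2 d x1 x2 x3 = ric d x2 x3 x1"
definition r3 :: "real \<Rightarrow> real \<Rightarrow> real \<Rightarrow> real \<Rightarrow> real" where
  "r3 d x1 x2 x3 = ric d x3 x1 x2"

definition ricci_flow_sol ::
  "real \<Rightarrow> real set \<Rightarrow> (real \<Rightarrow> real) \<Rightarrow> (real \<Rightarrow> real) \<Rightarrow> (real \<Rightarrow> real) \<Rightarrow> bool" where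
  "ricci_flow_sol d I x1 x2 x3 \<longleftrightarrow>
     (\<forall>t\<in>I. x1 t > 0 \<and> x2 t > 0 \<and> x3 t > 0 \<and>
        (x1 has_real_derivative (-2 * r1 d (x1 t) (x2 t) (x3 t) * x1 t)) (at t within I) \<and>
        (x2 has_real_derivative (-2 * r2 d (x1 t) (x2 t) (x3 t) * x2 t)) (at t within I) \<and>
        (x3 has_real_derivative (-2 * r3 d (x1 t) (x2 t) (x3 t) * x3 t)) (at t within I))"

text \<open>Volume-normalized Ricci flow dx_i/dt = -2 x_i (r_i - S/n), where
  S = d (r_1 + r_2 + r_3) is the scalar curvature and n = 3d = dim G/K,
  so S/n = (r_1 + r_2 + r_3)/3.\<close>
definition normalized_ricci_flow_sol ::
  "real \<Rightarrow> real set \<Rightarrow> (real \<Rightarrow> real) \<Rightarrow> (real \<Rightarrow> real) \<Rightarrow> (real \<Rightarrow> real) \<Rightarrow> bool" where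
  "normalized_ricci_flow_sol d I x1 x2 x3 \<longleftrightarrow>
     (\<forall>t\<in>I. x1 t > 0 \<and> x2 t > 0 \<and> x3 t > 0 \<and>
        (let a = r1 d (x1 t) (x2 t) (x3 t); b = r2 d (x1 t) (x2 t) (x3 t);
             c = r3 d (x1 t) (x2 t) (x3 t); S = d * (a + b + c); n = 3 * d in
        (x1 has_real_derivative (-2 * x1 t * (a - S / n))) (at t within I) \<and>
        (x2 has_real_derivative (-2 * x2 t * (b - S / n))) (at t within I) \<and>
        (x3 has_real_derivative (-2 * x3 t * (c - S / n))) (at t within I)))"

end

theory Submission imports Defs begin

(* The ordering x2 > x1 > x3 of the metric components is preserved because each gap
   evolves by a linear scalar equation.  For the flow and for its volume normalization
   alike, the velocities have the form x_i' = x_i (c(t) - 2 r_i) with a common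
   continuous rescaling rate c (c = 0, resp. c = 2 S/n).  The algebraic identity
     x_i (-2 r_i) - x_j (-2 r_j) = (x_i - x_j) * (-d ((x_i + x_j)^2 - x_k^2) / (x_i x_j x_k))
   then shows that u = x_i - x_j satisfies u' = u g with g continuous, and such a u
   keeps its sign: on a segment [a,b] one has u b = u a * exp (integral of g). *)

lemma linear_ode_solution_on_segment:
  fixes u g :: "real \<Rightarrow> real"
  assumes "a \<le> b" and g: "continuous_on {a..b} g"
    and u': "\<And>s. s \<in> {a..b} \<Longrightarrow> (u has_real_derivative u s * g s) (at s within {a..b})"
  shows "u b = u a * exp (integral {a..b} g)"
proof -
  define G where "G x = integral {a..x} g" for x
  define h where "h x = u x * exp (- G x)" for x
  have "(h has_real_derivative 0) (at s within {a..b})" if s: "s \<in> {a..b}" for s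
  proof -
    have G': "(G has_real_derivative g s) (at s within {a..b})"
      unfolding G_def using integral_has_real_derivative[OF g s] .
    have "((\<lambda>x. exp (- G x)) has_real_derivative exp (- G s) * - g s) (at s within {a..b})"
      by (rule derivative_eq_intros G' refl)+
    from DERIV_mult'[OF u'[OF s] this] show ?thesis
      unfolding h_def by (simp add: algebra_simps)
  qed
  then obtain k where "\<forall>x\<in>{a..b}. h x = k"
    using has_field_derivative_zero_constant[of "{a..b}" h] by blast
  then have "h b = h a" using \<open>a \<le> b\<close> by auto
  then show ?thesis by (simp add: h_def G_def exp_minus field_simps)
qed

lemma linear_ode_sgn_constant:
  fixes u g :: "real \<Rightarrow> real"
  assumes I: "is_interval I" "t0 \<in> I" "t \<in> I"
    and g: "continuous_on I g"
    and u': "\<forall>s\<in>I. (u has_real_derivative u s * g s) (at s within I)"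
  shows "sgn (u t) = sgn (u t0)"
proof -
  have on_segment: "u b = u a * exp (integral {a..b} g)"
    if "a \<in> I" "b \<in> I" "a \<le> b" for a b
  proof -
    have sub: "{a..b} \<subseteq> I"
      using I(1) that by (meson atLeastAtMost_iff is_interval_1 subsetI)
    show ?thesis
    proof (rule linear_ode_solution_on_segment[OF \<open>a \<le> b\<close>])
      show "continuous_on {a..b} g" using g sub by (rule continuous_on_subset)
      show "(u has_real_derivative u s * g s) (at s within {a..b})" if "s \<in> {a..b}" for s
        using DERIV_subset[OF u'[rule_format] sub] sub that by blast
    qed
  qed
  have sgn_exp: "sgn (x * exp y) = sgn x" for x y :: real
    by (simp add: sgn_mult)
  show ?thesis
  proof (cases "t0 \<le> t")
    case True
    then show ?thesis using on_segment[OF I(2,3)] sgn_exp by metis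
  next
    case False
    then show ?thesis using on_segment[OF I(3,2)] sgn_exp by (metis nle_le)
  qed
qed

lemma ric_velocity_gap:
  fixes d xi xj xk :: real
  assumes "xi \<noteq> 0" "xj \<noteq> 0" "xk \<noteq> 0"
  shows "xi * (- 2 * ric d xi xj xk) - xj * (- 2 * ric d xj xk xi)
     = (xi - xj) * (- d * ((xi + xj)^2 - xk^2) / (xi * xj * xk))"
  using assms unfolding ric_def
  by (simp add: field_simps) (simp add: algebra_simps power2_eq_square)

definition rescaled_ricci_flow_sol ::
  "real \<Rightarrow> real set \<Rightarrow> (real \<Rightarrow> real) \<Rightarrow>
     (real \<Rightarrow> real) \<Rightarrow> (real \<Rightarrow> real) \<Rightarrow> (real \<Rightarrow> real) \<Rightarrow> bool" where
  "rescaled_ricci_flow_sol d I c x1 x2 x3 \<longleftrightarrow>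
     (\<forall>t\<in>I. x1 t > 0 \<and> x2 t > 0 \<and> x3 t > 0 \<and>
        (x1 has_real_derivative x1 t * (c t - 2 * r1 d (x1 t) (x2 t) (x3 t))) (at t within I) \<and>
        (x2 has_real_derivative x2 t * (c t - 2 * r2 d (x1 t) (x2 t) (x3 t))) (at t within I) \<and>
        (x3 has_real_derivative x3 t * (c t - 2 * r3 d (x1 t) (x2 t) (x3 t))) (at t within I))"

lemma rescaled_ricci_flow_sol_cycle:
  assumes "rescaled_ricci_flow_sol d I c x1 x2 x3"
  shows "rescaled_ricci_flow_sol d I c x2 x3 x1"
  using assms unfolding rescaled_ricci_flow_sol_def r1_def r2_def r3_def by blast

(* The gap x1 - x2 of a rescaled flow obeys a linear equation, so it keeps its sign. *)
lemma rescaled_ricci_flow_gap_sgn: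
  assumes sol: "rescaled_ricci_flow_sol d I c x1 x2 x3"
    and c: "continuous_on I c"
    and I: "is_interval I" "t0 \<in> I" "t \<in> I"
  shows "sgn (x1 t - x2 t) = sgn (x1 t0 - x2 t0)"
proof -
  have pos: "\<forall>s\<in>I. x1 s > 0 \<and> x2 s > 0 \<and> x3 s > 0"
    using sol unfolding rescaled_ricci_flow_sol_def by blast
  have "continuous_on I x1" "continuous_on I x2" "continuous_on I x3"
    using sol unfolding rescaled_ricci_flow_sol_def
    by (meson DERIV_continuous continuous_on_eq_continuous_within)+
  then have g: "continuous_on I
      (\<lambda>s. c s - d * ((x1 s + x2 s)^2 - x3 s^2) / (x1 s * x2 s * x3 s))"
    using pos by (intro continuous_intros c) auto
  show ?thesis
  proof (rule linear_ode_sgn_constant[OF I g], intro ballI)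
    fix s assume s: "s \<in> I"
    have "((\<lambda>t. x1 t - x2 t) has_real_derivative
        x1 s * (c s - 2 * r1 d (x1 s) (x2 s) (x3 s)) - x2 s * (c s - 2 * r2 d (x1 s) (x2 s) (x3 s)))
        (at s within I)"
      using sol s unfolding rescaled_ricci_flow_sol_def by (intro DERIV_diff) auto
    moreover have "x1 s * (c s - 2 * r1 d (x1 s) (x2 s) (x3 s)) - x2 s * (c s - 2 * r2 d (x1 s) (x2 s) (x3 s))
        = (x1 s - x2 s) * c s
          + (x1 s * (- 2 * ric d (x1 s) (x2 s) (x3 s)) - x2 s * (- 2 * ric d (x2 s) (x3 s) (x1 s)))"
      unfolding r1_def r2_def by (simp add: algebra_simps)
    also have "\<dots> = (x1 s - x2 s) * c s
          + (x1 s - x2 s) * (- d * ((x1 s + x2 s)^2 - x3 s^2) / (x1 s * x2 s * x3 s))"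
      using pos s by (subst ric_velocity_gap) auto
    also have "\<dots> = (x1 s - x2 s) * (c s - d * ((x1 s + x2 s)^2 - x3 s^2) / (x1 s * x2 s * x3 s))"
      using right_diff_distrib[of "x1 s - x2 s" "c s"] by simp
    ultimately show "((\<lambda>t. x1 t - x2 t) has_real_derivative (x1 s - x2 s) *
        (c s - d * ((x1 s + x2 s)^2 - x3 s^2) / (x1 s * x2 s * x3 s))) (at s within I)"
      by simp
  qed
qed

lemma rescaled_ricci_flow_preserves_order:
  assumes sol: "rescaled_ricci_flow_sol d I c x1 x2 x3"
    and c: "continuous_on I c"
    and I: "is_interval I" "0 \<in> I" "t \<in> I"
    and init: "x2 0 > x1 0" "x1 0 > x3 0"
  shows "x2 t > x1 t \<and> x1 t > x3 t"
proof -
  have "sgn (x1 t - x2 t) = sgn (x1 0 - x2 0)"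
    by (rule rescaled_ricci_flow_gap_sgn[OF sol c I])
  moreover have "sgn (x3 t - x1 t) = sgn (x3 0 - x1 0)"
    using sol rescaled_ricci_flow_sol_cycle
    by (intro rescaled_ricci_flow_gap_sgn[OF _ c I]) blast
  ultimately show ?thesis using init by (auto simp: sgn_if split: if_splits)
qed

lemma ricci_flow_sol_rescaled:
  assumes "ricci_flow_sol d I x1 x2 x3"
  shows "rescaled_ricci_flow_sol d I (\<lambda>_. 0) x1 x2 x3"
proof -
  have rate_zero: "x * (0 - 2 * r) = -2 * r * x" for x r :: real
    by simp
  show ?thesis
    using assms unfolding ricci_flow_sol_def rescaled_ricci_flow_sol_def
    by (simp only: rate_zero)
qed

lemma normalized_ricci_flow_sol_rescaled:
  fixes d :: real
  assumes sol: "normalized_ricci_flow_sol d I x1 x2 x3" and "d \<noteq> 0"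
  defines "c \<equiv> \<lambda>t. 2 * (d * (r1 d (x1 t) (x2 t) (x3 t) + r2 d (x1 t) (x2 t) (x3 t)
                             + r3 d (x1 t) (x2 t) (x3 t)) / (3 * d))"
  shows "rescaled_ricci_flow_sol d I c x1 x2 x3" and "continuous_on I c"
proof -
  have rate_normalized: "-2 * x * (r - q) = x * (2 * q - 2 * r)" for x r q :: real
    by (simp add: algebra_simps)
  show resc: "rescaled_ricci_flow_sol d I c x1 x2 x3"
    using sol unfolding normalized_ricci_flow_sol_def rescaled_ricci_flow_sol_def c_def
    by (simp only: Let_def rate_normalized)
  have pos: "\<forall>t\<in>I. x1 t > 0 \<and> x2 t > 0 \<and> x3 t > 0"
    using resc unfolding rescaled_ricci_flow_sol_def by blast
  have "continuous_on I x1" "continuous_on I x2" "continuous_on I x3"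
    using resc unfolding rescaled_ricci_flow_sol_def
    by (meson DERIV_continuous continuous_on_eq_continuous_within)+
  then show "continuous_on I c"
    unfolding c_def r1_def r2_def r3_def ric_def
    using pos \<open>d \<noteq> 0\<close> by (intro continuous_intros) auto
qed

theorem mainTheorem8:
  fixes d :: real and I :: "real set"
  assumes "d \<in> {2, 4, 8}"
    and "is_interval I" and "0 \<in> I"
  shows "(\<forall>x1 x2 x3. ricci_flow_sol d I x1 x2 x3 \<and> x2 0 > x1 0 \<and> x1 0 > x3 0 \<and> x3 0 > 0
            \<longrightarrow> (\<forall>t\<in>I. x2 t > x1 t \<and> x1 t > x3 t))
       \<and> (\<forall>x1 x2 x3. normalized_ricci_flow_sol d I x1 x2 x3 \<and> x2 0 > x1 0 \<and> x1 0 > x3 0 \<and> x3 0 > 0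
            \<longrightarrow> (\<forall>t\<in>I. x2 t > x1 t \<and> x1 t > x3 t))"
proof (rule conjI; intro allI impI ballI)
  fix x1 x2 x3 t
  assume H: "ricci_flow_sol d I x1 x2 x3 \<and> x2 0 > x1 0 \<and> x1 0 > x3 0 \<and> x3 0 > 0"
    and t: "t \<in> I"
  then have sol: "ricci_flow_sol d I x1 x2 x3" by blast
  show "x2 t > x1 t \<and> x1 t > x3 t"
    using rescaled_ricci_flow_preserves_order[OF ricci_flow_sol_rescaled[OF sol]
        continuous_on_const assms(2,3) t] H
    by blast
next
  fix x1 x2 x3 t
  assume H: "normalized_ricci_flow_sol d I x1 x2 x3 \<and> x2 0 > x1 0 \<and> x1 0 > x3 0 \<and> x3 0 > 0"
    and t: "t \<in> I"
  then have sol: "normalized_ricci_flow_sol d I x1 x2 x3" by blast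
  have "d \<noteq> 0" using assms(1) by auto
  note rescaled = normalized_ricci_flow_sol_rescaled[OF sol this]
  show "x2 t > x1 t \<and> x1 t > x3 t"
    using rescaled_ricci_flow_preserves_order[OF rescaled assms(2,3) t] H
    by blast
qed

end
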